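(* Let $(A,\star)$ be a permutative algebra and $(B,\bullet,\{\cdot,\cdot\})$ a Poisson algebra. Define bilinear operations on $A\otimes B$ by $$(x\otimes a)\circ_{A\otimes B}(y\otimes b)=(x\star y)\otimes(a\bullet b),\qquad [x\otimes a,y\otimes b]_{A\otimes B}=(x\star y)\otimes\{a,b\},$$ for $x,y\in A$, $a,b\in B$. Then $(A\otimes B,\circ_{A\otimes B},[\cdot,\cdot]_{A\otimes B})$ is a dual pre-Poisson algebra.
   Context: Field $\mathbb{F}$ of characteristic $0$. A permutative algebra: $x\star(y\star z)=(x\star y)\star z=(y\star x)\star z$. A Poisson algebra $(B,\bullet,\{\cdot,\cdot\})$: $(B,\bullet)$ commutative associative, $(B,\{\cdot,\cdot\})$ a Lie algebra, and $\{x,y\bullet z\}=\{x,y\}\bullet z+y\bullet\{x,z\}$. A dual pre-Poisson algebra is a vector space with bilinear operations $\circ,[\cdot,\cdot]$ satisfying: $x\circ(y\circ z)=(x\circ y)\circ z=(y\circ x)\circ z$; $[x,[y,z]]=[[x,y],z]+[y,[x,z]]$; $[x,y\circ z]=[x,y]\circ z+y\circ[x,z]$; $[x\circ y,z]=x\circ[y,z]+y\circ[x,z]$; $[x,y]\circ z=-[y,x]\circ z$. *)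

theory Defs
  imports Complex_Main
begin

definition bilin ::
  "('k::field \<Rightarrow> 'a::ab_group_add \<Rightarrow> 'a) \<Rightarrow> ('k \<Rightarrow> 'b::ab_group_add \<Rightarrow> 'b) \<Rightarrow>
   ('k \<Rightarrow> 'c::ab_group_add \<Rightarrow> 'c) \<Rightarrow> ('a \<Rightarrow> 'b \<Rightarrow> 'c) \<Rightarrow> bool" where
  "bilin sA sB sC f \<longleftrightarrow>
     (\<forall>x. Vector_Spaces.linear sB sC (f x)) \<and> (\<forall>y. Vector_Spaces.linear sA sC (\<lambda>x. f x y))"

text \<open>Tensor product of vector spaces: (T, tens) with tens bilinear, the pure
  tensors spanning T, and every bilinear form on A x B factoring through a
  linear functional on T (universal property; uniqueness follows from spanning).\<close>

definition is_tensor_product ::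
  "('k::field \<Rightarrow> 'a::ab_group_add \<Rightarrow> 'a) \<Rightarrow> ('k \<Rightarrow> 'b::ab_group_add \<Rightarrow> 'b) \<Rightarrow>
   ('k \<Rightarrow> 't::ab_group_add \<Rightarrow> 't) \<Rightarrow> ('a \<Rightarrow> 'b \<Rightarrow> 't) \<Rightarrow> bool" where
  "is_tensor_product sA sB sT tens \<longleftrightarrow>
     vector_space sA \<and> vector_space sB \<and> vector_space sT \<and>
     bilin sA sB sT tens \<and>
     module.span sT {tens x y | x y. True} = UNIV \<and>
     (\<forall>\<phi> :: 'a \<Rightarrow> 'b \<Rightarrow> 'k. bilin sA sB (*) \<phi> \<longrightarrow>
        (\<exists>g. Vector_Spaces.linear sT (*) g \<and> (\<forall>x y. g (tens x y) = \<phi> x y)))"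

definition permutative_algebra ::
  "('k::field \<Rightarrow> 'a::ab_group_add \<Rightarrow> 'a) \<Rightarrow> ('a \<Rightarrow> 'a \<Rightarrow> 'a) \<Rightarrow> bool" where
  "permutative_algebra sA mul \<longleftrightarrow> vector_space sA \<and> bilin sA sA sA mul \<and>
     (\<forall>x y z. mul x (mul y z) = mul (mul x y) z \<and> mul (mul x y) z = mul (mul y x) z)"

definition lie_algebra ::
  "('k::field \<Rightarrow> 'a::ab_group_add \<Rightarrow> 'a) \<Rightarrow> ('a \<Rightarrow> 'a \<Rightarrow> 'a) \<Rightarrow> bool" where
  "lie_algebra sB br \<longleftrightarrow> vector_space sB \<and> bilin sB sB sB br \<and>
     (\<forall>x. br x x = 0) \<and>
     (\<forall>x y z. br x (br y z) + br y (br z x) + br z (br x y) = 0)"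

definition poisson_algebra ::
  "('k::field \<Rightarrow> 'b::ab_group_add \<Rightarrow> 'b) \<Rightarrow> ('b \<Rightarrow> 'b \<Rightarrow> 'b) \<Rightarrow> ('b \<Rightarrow> 'b \<Rightarrow> 'b) \<Rightarrow> bool" where
  "poisson_algebra sB mul br \<longleftrightarrow> vector_space sB \<and> bilin sB sB sB mul \<and>
     (\<forall>x y. mul x y = mul y x) \<and> (\<forall>x y z. mul (mul x y) z = mul x (mul y z)) \<and>
     lie_algebra sB br \<and>
     (\<forall>x y z. br x (mul y z) = mul (br x y) z + mul y (br x z))"

definition dual_pre_poisson_algebra ::
  "('k::field \<Rightarrow> 't::ab_group_add \<Rightarrow> 't) \<Rightarrow> ('t \<Rightarrow> 't \<Rightarrow> 't) \<Rightarrow> ('t \<Rightarrow> 't \<Rightarrow> 't) \<Rightarrow> bool" where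
  "dual_pre_poisson_algebra sT circ br \<longleftrightarrow> vector_space sT \<and>
     bilin sT sT sT circ \<and> bilin sT sT sT br \<and>
     (\<forall>x y z. circ x (circ y z) = circ (circ x y) z \<and> circ (circ x y) z = circ (circ y x) z) \<and>
     (\<forall>x y z. br x (br y z) = br (br x y) z + br y (br x z)) \<and>
     (\<forall>x y z. br x (circ y z) = circ (br x y) z + circ y (br x z)) \<and>
     (\<forall>x y z. br (circ x y) z = circ x (br y z) + circ y (br x z)) \<and>
     (\<forall>x y z. circ (br x y) z = - circ (br y x) z)"

end

theory Submission
  imports Defs
begin

text \<open>Each identity of a dual pre-Poisson algebra equates two maps that are linear in each
  of their three arguments, so it suffices to check it on pure tensors, which span
  \<open>A \<otimes> B\<close>.
  On pure tensors the permutative laws turn every \<open>A\<close>-factor into \<open>(x \<star> y) \<star> z\<close>,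
  and what remains is an identity of the Poisson algebra \<open>B\<close>: associativity and
  commutativity of \<open>\<bullet>\<close>, the Jacobi identity in derivation form, the Leibniz rule in
  either argument, and antisymmetry of the bracket.\<close>

lemma bilin_linear_right: "bilin sA sB sC f \<Longrightarrow> Vector_Spaces.linear sB sC (f x)"
  and bilin_linear_left: "bilin sA sB sC f \<Longrightarrow> Vector_Spaces.linear sA sC (\<lambda>x. f x y)"
  unfolding bilin_def by blast+

lemma bilin_add_right: "bilin sA sB sC f \<Longrightarrow> f x (a + b) = f x a + f x b"
  and bilin_minus_right: "bilin sA sB sC f \<Longrightarrow> f x (- a) = - f x a"
  and bilin_add_left: "bilin sA sB sC f \<Longrightarrow> f (x + y) a = f x a + f y a"
  and bilin_minus_left: "bilin sA sB sC f \<Longrightarrow> f (- x) a = - f x a"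
  by (metis bilin_linear_right bilin_linear_left linear_iff_module_hom module_hom.add module_hom.neg)+

definition trilin ::
  "('k::field \<Rightarrow> 'a::ab_group_add \<Rightarrow> 'a) \<Rightarrow> ('a \<Rightarrow> 'a \<Rightarrow> 'a \<Rightarrow> 'a) \<Rightarrow> bool" where
  "trilin s F \<longleftrightarrow>
     (\<forall>y z. Vector_Spaces.linear s s (\<lambda>x. F x y z)) \<and>
     (\<forall>x z. Vector_Spaces.linear s s (\<lambda>y. F x y z)) \<and>
     (\<forall>x y. Vector_Spaces.linear s s (\<lambda>z. F x y z))"

lemma trilin_nested_right:
  assumes f: "bilin s s s f" and g: "bilin s s s g"
  shows "trilin s (\<lambda>x y z. f x (g y z))"
  using Vector_Spaces.linear_compose[OF bilin_linear_left[OF g] bilin_linear_right[OF f]]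
    Vector_Spaces.linear_compose[OF bilin_linear_right[OF g] bilin_linear_right[OF f]]
    bilin_linear_left[OF f]
  by (simp add: trilin_def o_def)

lemma trilin_nested_left:
  assumes f: "bilin s s s f" and g: "bilin s s s g"
  shows "trilin s (\<lambda>x y z. f (g x y) z)"
  using Vector_Spaces.linear_compose[OF bilin_linear_left[OF g] bilin_linear_left[OF f]]
    Vector_Spaces.linear_compose[OF bilin_linear_right[OF g] bilin_linear_left[OF f]]
    bilin_linear_right[OF f]
  by (simp add: trilin_def o_def)

lemma trilin_swap: "trilin s F \<Longrightarrow> trilin s (\<lambda>x y z. F y x z)"
  unfolding trilin_def by blast

lemma linear_add_fun:
  "Vector_Spaces.linear s s f \<Longrightarrow> Vector_Spaces.linear s s g \<Longrightarrow>
    Vector_Spaces.linear s s (\<lambda>x. f x + g x)"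
  and linear_minus_fun: "Vector_Spaces.linear s s f \<Longrightarrow> Vector_Spaces.linear s s (\<lambda>x. - f x)"
  by (metis linear_iff_module_hom module_hom_def module_pair.intro module_pair.module_hom_add
      module_pair.module_hom_neg)+

lemma trilin_add: "trilin s F \<Longrightarrow> trilin s G \<Longrightarrow> trilin s (\<lambda>x y z. F x y z + G x y z)"
  and trilin_minus: "trilin s F \<Longrightarrow> trilin s (\<lambda>x y z. - F x y z)"
  unfolding trilin_def by (simp_all add: linear_add_fun linear_minus_fun)

lemma linear_eq_on_spanning_set:
  assumes span: "module.span s S = UNIV"
    and f: "Vector_Spaces.linear s s f" and g: "Vector_Spaces.linear s s g"
    and eq: "\<And>x. x \<in> S \<Longrightarrow> f x = g x"
  shows "f = g"
proof -
  interpret vector_space_pair s s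
    using f unfolding Vector_Spaces.linear_iff vector_space_pair_def by blast
  show ?thesis
    using linear_eq_on_span[OF f g eq] span by auto
qed

lemma trilin_eq_on_spanning_set:
  assumes span: "module.span s S = UNIV" and F: "trilin s F" and G: "trilin s G"
    and eq: "\<And>p q r. p \<in> S \<Longrightarrow> q \<in> S \<Longrightarrow> r \<in> S \<Longrightarrow> F p q r = G p q r"
  shows "F = G"
proof -
  have first: "(\<lambda>x. F x q r) = (\<lambda>x. G x q r)" if "q \<in> S" "r \<in> S" for q r
    using F G eq that by (intro linear_eq_on_spanning_set[OF span]) (auto simp: trilin_def)
  have second: "(\<lambda>y. F x y r) = (\<lambda>y. G x y r)" if "r \<in> S" for x r
    using F G first that
    by (intro linear_eq_on_spanning_set[OF span]) (auto simp: trilin_def fun_eq_iff)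
  have "F x y = G x y" for x y
    using F G second
    by (intro linear_eq_on_spanning_set[OF span]) (auto simp: trilin_def fun_eq_iff)
  then show ?thesis
    by blast
qed

lemma permutative_algebra_assoc:
  "permutative_algebra s mul \<Longrightarrow> mul x (mul y z) = mul (mul x y) z"
  and permutative_algebra_left_perm:
  "permutative_algebra s mul \<Longrightarrow> mul (mul y x) z = mul (mul x y) z"
  and permutative_algebra_left_commute:
  "permutative_algebra s mul \<Longrightarrow> mul y (mul x z) = mul (mul x y) z"
  unfolding permutative_algebra_def by metis+

lemma lie_algebra_antisym:
  assumes "lie_algebra s br"
  shows "br x y = - br y x"
proof -
  have bilin: "bilin s s s br" and alt: "\<And>x. br x x = 0"
    using assms by (simp_all add: lie_algebra_def)
  have "br x y + br y x = br (x + y) (x + y)"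
    by (simp add: bilin_add_left[OF bilin] bilin_add_right[OF bilin] alt[of x] alt[of y] add.commute)
  also have "\<dots> = 0"
    by (rule alt)
  finally show ?thesis
    by (simp only: eq_neg_iff_add_eq_0)
qed

lemma lie_algebra_jacobi_derivation:
  assumes "lie_algebra s br"
  shows "br a (br b c) = br (br a b) c + br b (br a c)"
proof -
  have bilin: "bilin s s s br"
    using assms by (simp add: lie_algebra_def)
  have "br a (br b c) + br b (br c a) + br c (br a b) = 0"
    using assms by (simp add: lie_algebra_def)
  moreover have "br b (br c a) = - br b (br a c)"
    by (simp add: lie_algebra_antisym[OF assms, of c a] bilin_minus_right[OF bilin])
  moreover have "br c (br a b) = - br (br a b) c"
    by (rule lie_algebra_antisym[OF assms])
  ultimately show ?thesis
    by (simp add: algebra_simps eq_neg_iff_add_eq_0)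
qed

lemma poisson_algebra_leibniz_left:
  assumes "poisson_algebra s mul br"
  shows "br (mul a b) c = mul a (br b c) + mul b (br a c)"
proof -
  have lie: "lie_algebra s br" and mul: "bilin s s s mul" and comm: "\<And>x y. mul x y = mul y x"
    and leibniz: "\<And>x y z. br x (mul y z) = mul (br x y) z + mul y (br x z)"
    using assms by (simp_all add: poisson_algebra_def)
  have "br (mul a b) c = - (mul (br c a) b + mul a (br c b))"
    by (simp add: lie_algebra_antisym[OF lie, of "mul a b"] leibniz)
  also have "\<dots> = mul (br a c) b + mul a (br b c)"
    by (simp add: lie_algebra_antisym[OF lie, of c] bilin_minus_left[OF mul] bilin_minus_right[OF mul])
  finally show ?thesis
    by (simp add: comm add.commute)
qed

locale permutative_poisson_tensor =
  fixes sA :: "'k::field \<Rightarrow> 'a::ab_group_add \<Rightarrow> 'a"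
    and sB :: "'k \<Rightarrow> 'b::ab_group_add \<Rightarrow> 'b"
    and sT :: "'k \<Rightarrow> 't::ab_group_add \<Rightarrow> 't"
    and star :: "'a \<Rightarrow> 'a \<Rightarrow> 'a"
    and bullet :: "'b \<Rightarrow> 'b \<Rightarrow> 'b" and pb :: "'b \<Rightarrow> 'b \<Rightarrow> 'b"
    and tens :: "'a \<Rightarrow> 'b \<Rightarrow> 't"
    and circ :: "'t \<Rightarrow> 't \<Rightarrow> 't" and br :: "'t \<Rightarrow> 't \<Rightarrow> 't"
  assumes permutative: "permutative_algebra sA star"
    and poisson: "poisson_algebra sB bullet pb"
    and tensor: "is_tensor_product sA sB sT tens"
    and circ_bilin: "bilin sT sT sT circ" and br_bilin: "bilin sT sT sT br"
    and circ_tens: "\<And>x y a b. circ (tens x a) (tens y b) = tens (star x y) (bullet a b)"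
    and br_tens: "\<And>x y a b. br (tens x a) (tens y b) = tens (star x y) (pb a b)"
begin

lemma eq_on_pure_tensors:
  assumes "trilin sT F" and "trilin sT G"
    and "\<And>x y z a b c. F (tens x a) (tens y b) (tens z c) = G (tens x a) (tens y b) (tens z c)"
  shows "F u v w = G u v w"
proof -
  have "module.span sT {tens x a | x a. True} = UNIV"
    using tensor by (simp add: is_tensor_product_def)
  then have "F = G"
    using assms(1,2) by (rule trilin_eq_on_spanning_set) (use assms(3) in blast)
  then show ?thesis
    by simp
qed

lemmas star_normalize =
  permutative_algebra_assoc[OF permutative]
  permutative_algebra_left_perm[OF permutative]
  permutative_algebra_left_commute[OF permutative]

lemma tens_bilin: "bilin sA sB sT tens"
  using tensor by (simp add: is_tensor_product_def)

lemmas tens_add_right = bilin_add_right[OF tens_bilin]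
  and tens_minus_right = bilin_minus_right[OF tens_bilin]

lemma bullet_commute: "bullet a b = bullet b a"
  and bullet_assoc: "bullet (bullet a b) c = bullet a (bullet b c)"
  using poisson unfolding poisson_algebra_def by blast+

lemma bullet_bilin: "bilin sB sB sB bullet"
  and pb_lie: "lie_algebra sB pb"
  and pb_leibniz_right: "pb a (bullet b c) = bullet (pb a b) c + bullet b (pb a c)"
  using poisson by (simp_all add: poisson_algebra_def)

lemma circ_assoc: "circ u (circ v w) = circ (circ u v) w"
  by (rule eq_on_pure_tensors[where F = "\<lambda>u v w. circ u (circ v w)"
        and G = "\<lambda>u v w. circ (circ u v) w"])
    (simp_all add: trilin_nested_right trilin_nested_left circ_bilin circ_tens star_normalize
      bullet_assoc)

lemma circ_left_perm: "circ (circ u v) w = circ (circ v u) w"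
  by (rule eq_on_pure_tensors[where F = "\<lambda>u v w. circ (circ u v) w"
        and G = "\<lambda>u v w. circ (circ v u) w"])
    (simp_all add: trilin_nested_left trilin_swap circ_bilin circ_tens star_normalize
      bullet_commute)

lemma br_jacobi: "br u (br v w) = br (br u v) w + br v (br u w)"
  by (rule eq_on_pure_tensors[where F = "\<lambda>u v w. br u (br v w)"
        and G = "\<lambda>u v w. br (br u v) w + br v (br u w)"])
    (simp_all add: trilin_nested_right trilin_nested_left trilin_swap trilin_add br_bilin br_tens
      star_normalize tens_add_right[symmetric] lie_algebra_jacobi_derivation[OF pb_lie, symmetric])

lemma br_circ_right: "br u (circ v w) = circ (br u v) w + circ v (br u w)"
  by (rule eq_on_pure_tensors[where F = "\<lambda>u v w. br u (circ v w)"
        and G = "\<lambda>u v w. circ (br u v) w + circ v (br u w)"])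
    (simp_all add: trilin_nested_right trilin_nested_left trilin_swap trilin_add circ_bilin br_bilin
      circ_tens br_tens star_normalize tens_add_right pb_leibniz_right)

lemma br_circ_left: "br (circ u v) w = circ u (br v w) + circ v (br u w)"
  by (rule eq_on_pure_tensors[where F = "\<lambda>u v w. br (circ u v) w"
        and G = "\<lambda>u v w. circ u (br v w) + circ v (br u w)"])
    (simp_all add: trilin_nested_right trilin_nested_left trilin_swap trilin_add circ_bilin br_bilin
      circ_tens br_tens star_normalize tens_add_right poisson_algebra_leibniz_left[OF poisson])

lemma circ_br_antisym: "circ (br u v) w = - circ (br v u) w"
  by (rule eq_on_pure_tensors[where F = "\<lambda>u v w. circ (br u v) w"
        and G = "\<lambda>u v w. - circ (br v u) w"])
    (simp_all add: trilin_nested_left trilin_swap trilin_minus circ_bilin br_bilin circ_tens br_tens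
      star_normalize tens_minus_right[symmetric] bilin_minus_left[OF bullet_bilin, symmetric]
      lie_algebra_antisym[OF pb_lie, symmetric])

end

theorem proposition2p12:
  fixes sA :: "'k::field_char_0 \<Rightarrow> 'a::ab_group_add \<Rightarrow> 'a"
    and sB :: "'k \<Rightarrow> 'b::ab_group_add \<Rightarrow> 'b"
    and sT :: "'k \<Rightarrow> 't::ab_group_add \<Rightarrow> 't"
    and star :: "'a \<Rightarrow> 'a \<Rightarrow> 'a"
    and bullet :: "'b \<Rightarrow> 'b \<Rightarrow> 'b" and pb :: "'b \<Rightarrow> 'b \<Rightarrow> 'b"
    and tens :: "'a \<Rightarrow> 'b \<Rightarrow> 't"
    and circ :: "'t \<Rightarrow> 't \<Rightarrow> 't" and br :: "'t \<Rightarrow> 't \<Rightarrow> 't"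
  assumes "permutative_algebra sA star"
    and "poisson_algebra sB bullet pb"
    and "is_tensor_product sA sB sT tens"
    and "bilin sT sT sT circ" and "bilin sT sT sT br"
    and "\<And>x y a b. circ (tens x a) (tens y b) = tens (star x y) (bullet a b)"
    and "\<And>x y a b. br (tens x a) (tens y b) = tens (star x y) (pb a b)"
  shows "dual_pre_poisson_algebra sT circ br"
proof -
  interpret permutative_poisson_tensor sA sB sT star bullet pb tens circ br
    using assms by unfold_locales
  have "vector_space sT"
    using assms(3) by (simp add: is_tensor_product_def)
  then show ?thesis
    unfolding dual_pre_poisson_algebra_def
    using circ_bilin br_bilin circ_assoc circ_left_perm br_jacobi br_circ_right br_circ_left
      circ_br_antisym
    by blast
qed

end
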